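(* Fix angles $\alpha_1,\alpha_2,\alpha_3\in(0,\pi/2)$ with $\alpha_1+\alpha_2+\alpha_3=\pi$. Let $H$ and $H'$ be two right-angled hexagons in the hyperbolic plane, each with a choice of long and short edges, whose tripods have the same angles $2\alpha_1,2\alpha_2,2\alpha_3$ at the center and common edge lengths $d$ and $d'$ respectively. Let $2\ell_i$ and $2\ell_i'$ denote the lengths of the long edge $s_i$ of $H$ and of $H'$ respectively. Then for all $i,j\in\{1,2,3\}$, \[ \frac{\cosh\ell_i'}{\cosh\ell_j'}=\frac{\cosh\ell_i}{\cosh\ell_j}. \] That is, with the angles $\alpha_i$ fixed, the ratios among $\cosh\ell_1,\cosh\ell_2,\cosh\ell_3$ do not depend on $d$.
   Context: A right-angled hexagon $H$ comes with a choice of three pairwise non-consecutive edges $s_1,s_2,s_3$ (long edges); the other three edges $t_1,t_2,t_3$ are the short edges, $t_i$ opposite to $s_i$. Let $\tilde l_i$ be the complete geodesic containing $t_i$, $O$ the unique point equidistant from $\tilde l_1,\tilde l_2,\tilde l_3$, and $A_i$ the foot of the perpendicular from $O$ to $\tilde l_i$. The tripod of $H$ is $OA_1\cup OA_2\cup OA_3$; its three edges have a common length $d$. For $\{i,j,m\}=\{1,2,3\}$ the angle at $O$ between $OA_j$ and $OA_m$ (on the side of $s_i$) is denoted $2\alpha_i$. Here one considers hexagons with $O$ in the interior of $H$, so that $\alpha_i<\pi/2$ and $\alpha_1+\alpha_2+\alpha_3=\pi$. *)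

theory Defs
  imports "HOL-Analysis.Analysis"
begin

text \<open>Hyperboloid model of the hyperbolic plane in real^3 with the Minkowski form
  B(x,y) = x1 y1 + x2 y2 - x3 y3; points: B(x,x) = -1, x3 > 0.\<close>

definition mink :: "real^3 \<Rightarrow> real^3 \<Rightarrow> real" where
  "mink x y = x$1 * y$1 + x$2 * y$2 - x$3 * y$3"

definition hyp_pt :: "real^3 \<Rightarrow> bool" where
  "hyp_pt x \<longleftrightarrow> mink x x = -1 \<and> x$3 > 0"

definition hdist :: "real^3 \<Rightarrow> real^3 \<Rightarrow> real" where
  "hdist x y = arcosh (- mink x y)"

text \<open>Complete geodesic through two distinct points p, q.\<close>
definition hline :: "real^3 \<Rightarrow> real^3 \<Rightarrow> (real^3) set" where
  "hline p q = {x. hyp_pt x \<and> x \<in> span {p, q}}"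

definition hdist_set :: "real^3 \<Rightarrow> (real^3) set \<Rightarrow> real" where
  "hdist_set x S = Inf (hdist x ` S)"

text \<open>Unsigned angle at vertex v between the geodesics from v to p and from v to q,
  computed from the tangent vectors at v (Minkowski-orthogonal projections).\<close>
definition hangle :: "real^3 \<Rightarrow> real^3 \<Rightarrow> real^3 \<Rightarrow> real" where
  "hangle p v q =
     (let u = p + mink p v *\<^sub>R v; w = q + mink q v *\<^sub>R v
      in arccos (mink u w / sqrt (mink u u * mink w w)))"

text \<open>Euclidean determinant of three vectors; its sign tells on which side of the
  geodesic hline p q (the plane span {p,q}) the point x lies.\<close>
definition det3 :: "real^3 \<Rightarrow> real^3 \<Rightarrow> real^3 \<Rightarrow> real" where
  "det3 a b c = a$1 * (b$2 * c$3 - b$3 * c$2) - a$2 * (b$1 * c$3 - b$3 * c$1)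
               + a$3 * (b$1 * c$2 - b$2 * c$1)"

text \<open>Vertices of a hexagon, indexed cyclically mod 6. Edge k joins vertex k and k+1.\<close>
definition vx :: "(nat \<Rightarrow> real^3) \<Rightarrow> nat \<Rightarrow> real^3" where
  "vx v k = v (k mod 6)"

definition right_angled_hexagon :: "(nat \<Rightarrow> real^3) \<Rightarrow> bool" where
  "right_angled_hexagon v \<longleftrightarrow>
     (\<forall>k<6. hyp_pt (v k)) \<and>
     (\<forall>k<6. \<forall>j<6. \<forall>j'<6. j \<noteq> k \<and> j \<noteq> (k+1) mod 6 \<and> j' \<noteq> k \<and> j' \<noteq> (k+1) mod 6 \<longrightarrow>
        det3 (vx v k) (vx v (k+1)) (vx v j) * det3 (vx v k) (vx v (k+1)) (vx v j') > 0) \<and>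
     (\<forall>k<6. hangle (vx v (k+5)) (vx v k) (vx v (k+1)) = pi / 2)"

definition hex_interior :: "(nat \<Rightarrow> real^3) \<Rightarrow> real^3 \<Rightarrow> bool" where
  "hex_interior v x \<longleftrightarrow> hyp_pt x \<and>
     (\<forall>k<6. \<forall>j<6. j \<noteq> k \<and> j \<noteq> (k+1) mod 6 \<longrightarrow>
        det3 (vx v k) (vx v (k+1)) (vx v j) * det3 (vx v k) (vx v (k+1)) x > 0)"

text \<open>Labelling convention: long edges s_1, s_2, s_3 are edges 0, 2, 4
  (s_i = edge 2(i-1)); short edge t_i is the opposite edge 2(i-1)+3 (mod 6),
  i.e. t_1 = edge 3, t_2 = edge 5, t_3 = edge 1.\<close>

definition long_len :: "(nat \<Rightarrow> real^3) \<Rightarrow> nat \<Rightarrow> real" where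
  "long_len v i = hdist (vx v (2*(i-1))) (vx v (2*(i-1)+1))"

definition short_line :: "(nat \<Rightarrow> real^3) \<Rightarrow> nat \<Rightarrow> (real^3) set" where
  "short_line v i = hline (vx v (2*(i-1)+3)) (vx v (2*(i-1)+4))"

definition perp_foot :: "real^3 \<Rightarrow> (real^3) set \<Rightarrow> real^3 \<Rightarrow> bool" where
  "perp_foot C L A \<longleftrightarrow> A \<in> L \<and> (\<forall>X\<in>L. X \<noteq> A \<longrightarrow> hangle C A X = pi / 2)"

definition hex_tripod ::
  "(nat \<Rightarrow> real^3) \<Rightarrow> real^3 \<Rightarrow> (nat \<Rightarrow> real^3) \<Rightarrow> real \<Rightarrow> (nat \<Rightarrow> real) \<Rightarrow> bool" where
  "hex_tripod v C A d \<alpha> \<longleftrightarrow>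
     right_angled_hexagon v \<and> hex_interior v C \<and>
     hdist_set C (short_line v 1) = hdist_set C (short_line v 2) \<and>
     hdist_set C (short_line v 2) = hdist_set C (short_line v 3) \<and>
     (\<forall>i\<in>{1,2,3}. perp_foot C (short_line v i) (A i) \<and> hdist C (A i) = d) \<and>
     (\<forall>i j m. {i, j, m} = {1, 2, 3::nat} \<longrightarrow> hangle (A j) C (A m) = 2 * \<alpha> i)"

end

(* In the hyperboloid model, the tangent at its foot A_j of the tripod leg O A_j is a normal of
   the geodesic containing the short edge t_j, and this geodesic is perpendicular to both long
   edges adjacent to t_j.  For the long edge s_i, whose neighbouring short edges are t_j and t_m,
   the Minkowski product of the two normals is computed twice: along s_i it is governed by
   cosh (2 l_i), and at the centre O, by the law of cosines in the triangle A_j O A_m, by d and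
   the angle 2 alpha_i.  Comparing gives cosh l_i = cosh d * sin alpha_i, so the ratios
   cosh l_i / cosh l_j = sin alpha_i / sin alpha_j do not depend on d. *)

theory Submission
  imports Defs "HOL-Analysis.Cross3"
begin

unbundle cross3_syntax

subsection \<open>The Minkowski form\<close>

lemma mink_commute: "mink x y = mink y x"
  unfolding mink_def by (simp add: algebra_simps)

lemma mink_add_left [simp]: "mink (x + y) z = mink x z + mink y z"
  and mink_add_right [simp]: "mink z (x + y) = mink z x + mink z y"
  and mink_diff_left [simp]: "mink (x - y) z = mink x z - mink y z"
  and mink_diff_right [simp]: "mink z (x - y) = mink z x - mink z y"
  and mink_scaleR_left [simp]: "mink (a *\<^sub>R x) z = a * mink x z"
  and mink_scaleR_right [simp]: "mink z (a *\<^sub>R x) = a * mink z x"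
  and mink_zero_left [simp]: "mink 0 z = 0"
  and mink_zero_right [simp]: "mink z 0 = 0"
  unfolding mink_def by (simp_all add: algebra_simps)

text \<open>\<open>mflip\<close> turns Minkowski orthogonality into Euclidean orthogonality, so that cross products
  apply.\<close>

definition mflip :: "real^3 \<Rightarrow> real^3" where
  "mflip x = vector [x$1, x$2, - x$3]"

lemma mink_eq_inner_mflip: "mink x y = x \<bullet> mflip y"
  unfolding mink_def mflip_def by (simp add: inner_vec_def sum_3)

lemma mflip_eq_0_iff [simp]: "mflip x = 0 \<longleftrightarrow> x = 0"
  unfolding mflip_def by (auto simp: vec_eq_iff forall_3)

lemma cross_mflip: "mflip a \<times> mflip b = - mflip (a \<times> b)"
  unfolding mflip_def by (simp add: cross3_simps forall_3)

lemma mink_orthogonal_collinear: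
  assumes "mink x a = 0" "mink x b = 0" "mink y a = 0" "mink y b = 0" "a \<times> b \<noteq> 0" "y \<noteq> 0"
  obtains t where "x = t *\<^sub>R y"
proof -
  define n where "n = mflip a \<times> mflip b"
  have "n \<noteq> 0"
    using assms(5) by (simp add: n_def cross_mflip)
  have along_n: "(n \<bullet> n) *\<^sub>R z = (n \<bullet> z) *\<^sub>R n" if "mink z a = 0" "mink z b = 0" for z
  proof -
    have "z \<times> n = 0"
      using that by (simp add: n_def Lagrange mink_eq_inner_mflip)
    then have "n \<times> (n \<times> z) = 0"
      by (metis cross_skew cross_zero_right)
    then show ?thesis
      by (simp add: Lagrange)
  qed
  have "n \<bullet> y \<noteq> 0"
    using along_n[OF assms(3,4)] assms(6) \<open>n \<noteq> 0\<close> by auto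
  have "(n \<bullet> n) *\<^sub>R ((n \<bullet> y) *\<^sub>R x) = (n \<bullet> y) *\<^sub>R ((n \<bullet> n) *\<^sub>R x)"
    by (simp add: ac_simps)
  also have "\<dots> = (n \<bullet> x) *\<^sub>R ((n \<bullet> n) *\<^sub>R y)"
    by (simp add: along_n[OF assms(1,2)] along_n[OF assms(3,4)] ac_simps)
  also have "\<dots> = (n \<bullet> n) *\<^sub>R ((n \<bullet> x) *\<^sub>R y)"
    by (simp add: ac_simps)
  finally have "(n \<bullet> y) *\<^sub>R x = (n \<bullet> x) *\<^sub>R y"
    using \<open>n \<noteq> 0\<close> by (simp only: scaleR_cancel_left inner_eq_zero_iff) simp
  then have "x = ((n \<bullet> x) / (n \<bullet> y)) *\<^sub>R y"
    using \<open>n \<noteq> 0\<close> \<open>n \<bullet> y \<noteq> 0\<close> by (simp add: eq_vector_fraction_iff)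
  then show ?thesis
    by (rule that)
qed

lemma hyp_pt_mink_self: "hyp_pt x \<Longrightarrow> mink x x = -1"
  unfolding hyp_pt_def by simp

lemma mink_tangent_self:
  assumes "hyp_pt v" "mink x v = 0"
  shows mink_tangent_self_nonneg: "mink x x \<ge> 0"
    and mink_tangent_self_eq_0: "mink x x = 0 \<Longrightarrow> x = 0"
proof -
  have v: "v$1 * v$1 + v$2 * v$2 - v$3 * v$3 = -1" "v$3 > 0"
    using assms(1) unfolding hyp_pt_def mink_def by auto
  have x: "x$1 * v$1 + x$2 * v$2 - x$3 * v$3 = 0"
    using assms(2) unfolding mink_def by simp
  have vx: "x$3 * v$3 = x$1 * v$1 + x$2 * v$2" "v$3 * v$3 = 1 + v$1 * v$1 + v$2 * v$2"
    using v x by linarith+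
  have "v$3 * v$3 * mink x x = (v$3 * v$3) * (x$1 * x$1 + x$2 * x$2) - (x$3 * v$3)^2"
    unfolding mink_def by (simp add: power2_eq_square algebra_simps)
  also have "\<dots> = (1 + v$1 * v$1 + v$2 * v$2) * (x$1 * x$1 + x$2 * x$2) - (x$1 * v$1 + x$2 * v$2)^2"
    by (simp only: vx)
  also have "\<dots> = (x$1 * x$1 + x$2 * x$2) + (x$1 * v$2 - x$2 * v$1)^2"
    by (simp add: power2_eq_square algebra_simps)
  finally have lagrange: "v$3 * v$3 * mink x x = (x$1 * x$1 + x$2 * x$2) + (x$1 * v$2 - x$2 * v$1)^2" .
  have "v$3 * v$3 * mink x x \<ge> 0"
    unfolding lagrange by (intro add_nonneg_nonneg) simp_all
  moreover have "v$3 * v$3 > 0"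
    using v(2) by simp
  ultimately show "mink x x \<ge> 0"
    using zero_le_mult_iff[of "v$3 * v$3" "mink x x"] by linarith
  assume "mink x x = 0"
  then have "x$1 * x$1 + x$2 * x$2 + (x$1 * v$2 - x$2 * v$1)^2 = 0"
    using lagrange by simp
  then have "x$1 * x$1 + x$2 * x$2 = 0"
    by (smt (verit) zero_le_power2 zero_le_square)
  then have "x$1 = 0" "x$2 = 0"
    by (simp_all add: sum_squares_eq_zero_iff)
  moreover have "x$3 = 0"
    using x v(2) calculation by simp
  ultimately show "x = 0"
    by (simp add: vec_eq_iff forall_3)
qed

lemma mink_tangent_Cauchy_Schwarz:
  assumes "hyp_pt v" "mink u v = 0" "mink w v = 0"
  shows "(mink u w)^2 \<le> mink u u * mink w w"
proof (cases "mink w w = 0")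
  case True
  then show ?thesis
    using mink_tangent_self_eq_0[OF assms(1,3)] by simp
next
  case False
  then have w: "mink w w > 0"
    using mink_tangent_self_nonneg[OF assms(1,3)] by simp
  define t where "t = mink u w / mink w w"
  have "0 \<le> mink (u - t *\<^sub>R w) (u - t *\<^sub>R w)"
    using assms by (intro mink_tangent_self_nonneg[OF assms(1)]) simp
  also have "\<dots> = mink u u - (mink u w)^2 / mink w w"
    using w by (simp add: t_def mink_commute[of w u] power2_eq_square field_simps)
  finally show ?thesis
    using w by (simp add: field_simps)
qed

lemma mink_hyp_pt_le_neg1:
  assumes "hyp_pt x" "hyp_pt y"
  shows "mink x y \<le> -1"
proof -
  have x: "x$3 * x$3 = 1 + x$1 * x$1 + x$2 * x$2" "x$3 > 0"
    using assms(1) unfolding hyp_pt_def mink_def by auto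
  have y: "y$3 * y$3 = 1 + y$1 * y$1 + y$2 * y$2" "y$3 > 0"
    using assms(2) unfolding hyp_pt_def mink_def by auto
  have "(x$3 * y$3)^2 - (1 + x$1 * y$1 + x$2 * y$2)^2
        = (x$1 - y$1)^2 + (x$2 - y$2)^2 + (x$1 * y$2 - x$2 * y$1)^2"
    using x(1) y(1) by algebra
  then have "(1 + x$1 * y$1 + x$2 * y$2)^2 \<le> (x$3 * y$3)^2"
    by (smt (verit) zero_le_power2)
  then have "\<bar>1 + x$1 * y$1 + x$2 * y$2\<bar> \<le> \<bar>x$3 * y$3\<bar>"
    by (simp add: abs_le_square_iff)
  moreover have "x$3 * y$3 > 0"
    using x y by simp
  ultimately show ?thesis
    unfolding mink_def by linarith
qed

lemma cosh_hdist:
  assumes "hyp_pt x" "hyp_pt y"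
  shows "cosh (hdist x y) = - mink x y"
  using mink_hyp_pt_le_neg1[OF assms] unfolding hdist_def by simp

lemma hdist_nonneg: "hyp_pt x \<Longrightarrow> hyp_pt y \<Longrightarrow> hdist x y \<ge> 0"
  using mink_hyp_pt_le_neg1 unfolding hdist_def by simp

definition tangent_proj :: "real^3 \<Rightarrow> real^3 \<Rightarrow> real^3" where
  "tangent_proj v p = p + mink p v *\<^sub>R v"

lemma mink_tangent_proj_base [simp]: "hyp_pt v \<Longrightarrow> mink (tangent_proj v p) v = 0"
  unfolding tangent_proj_def hyp_pt_def by simp

lemma mink_tangent_proj_left: "mink (tangent_proj v p) x = mink p x + mink p v * mink v x"
  unfolding tangent_proj_def by (simp add: mink_commute[of v x])

lemma mink_tangent_proj:
  "hyp_pt v \<Longrightarrow> mink (tangent_proj v p) (tangent_proj v q) = mink p q + mink p v * mink q v"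
  unfolding tangent_proj_def
  by (simp add: hyp_pt_mink_self mink_commute[of v p] mink_commute[of v q] algebra_simps)

lemma mink_hyp_pt_eq_neg1_iff:
  assumes "hyp_pt x" "hyp_pt y"
  shows "mink x y = -1 \<longleftrightarrow> x = y"
proof
  assume xy: "mink x y = -1"
  have "mink (tangent_proj x y) (tangent_proj x y) = 0"
    using assms xy by (simp add: mink_tangent_proj hyp_pt_mink_self mink_commute[of y x])
  then have "tangent_proj x y = 0"
    using assms(1) by (simp add: mink_tangent_self_eq_0)
  then show "x = y"
    using xy by (simp add: tangent_proj_def mink_commute[of y x])
qed (use assms in \<open>simp add: hyp_pt_mink_self\<close>)

lemma hyp_pt_cross_nonzero:
  assumes "hyp_pt x" "hyp_pt y" "x \<noteq> y"
  shows "x \<times> y \<noteq> 0"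
proof
  assume "x \<times> y = 0"
  moreover have "x \<noteq> 0" "y \<noteq> 0"
    using assms(1,2) unfolding hyp_pt_def by auto
  ultimately obtain c where c: "y = c *\<^sub>R x"
    by (auto simp: cross_eq_0 collinear_lemma)
  then have "c * c = 1"
    using hyp_pt_mink_self[OF assms(1)] hyp_pt_mink_self[OF assms(2)] by simp
  moreover have "c > 0"
    using assms(1,2) c unfolding hyp_pt_def by (simp add: zero_less_mult_iff)
  ultimately have "c = 1"
    by (auto simp: square_eq_1_iff)
  then show False
    using c assms(3) by simp
qed

lemma hangle_tangent_proj:
  "hangle p v q = arccos (mink (tangent_proj v p) (tangent_proj v q) /
     sqrt (mink (tangent_proj v p) (tangent_proj v p) * mink (tangent_proj v q) (tangent_proj v q)))"
  unfolding hangle_def tangent_proj_def Let_def ..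

lemma hangle_commute: "hangle p v q = hangle q v p"
  unfolding hangle_tangent_proj
  by (simp add: mink_commute[of "tangent_proj v q" "tangent_proj v p"] mult.commute)

lemma cos_hangle:
  assumes "hyp_pt v"
  shows "cos (hangle p v q) = mink (tangent_proj v p) (tangent_proj v q) /
     sqrt (mink (tangent_proj v p) (tangent_proj v p) * mink (tangent_proj v q) (tangent_proj v q))"
  (is "_ = ?m / sqrt (?u * ?w)")
proof -
  have tangent: "mink (tangent_proj v p) v = 0" "mink (tangent_proj v q) v = 0"
    using assms by simp_all
  have "?m^2 \<le> ?u * ?w" "?u * ?w \<ge> 0"
    using mink_tangent_Cauchy_Schwarz[OF assms tangent]
      mink_tangent_self_nonneg[OF assms tangent(1)] mink_tangent_self_nonneg[OF assms tangent(2)]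
    by simp_all
  then have "\<bar>?m\<bar> \<le> sqrt (?u * ?w)"
    by (simp add: real_le_rsqrt)
  then have "\<bar>?m / sqrt (?u * ?w)\<bar> \<le> 1"
    by (cases "?u * ?w = 0") (simp_all add: abs_divide divide_le_eq_1)
  then show ?thesis
    unfolding hangle_tangent_proj by (rule cos_arccos_abs)
qed

lemma hangle_right_imp_orthogonal:
  assumes "hyp_pt v" "hangle p v q = pi / 2"
  shows "mink p (tangent_proj v q) = 0"
proof -
  have tangent: "mink (tangent_proj v p) v = 0" "mink (tangent_proj v q) v = 0"
    using assms(1) by simp_all
  have "mink (tangent_proj v p) (tangent_proj v q) /
     sqrt (mink (tangent_proj v p) (tangent_proj v p) * mink (tangent_proj v q) (tangent_proj v q)) = 0"
    using cos_hangle[OF assms(1), of p q] assms(2) by simp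
  then consider "mink (tangent_proj v p) (tangent_proj v q) = 0"
    | "mink (tangent_proj v p) (tangent_proj v p) * mink (tangent_proj v q) (tangent_proj v q) = 0"
    by (auto simp del: mink_tangent_proj_base)
  then have "mink (tangent_proj v p) (tangent_proj v q) = 0"
    using mink_tangent_Cauchy_Schwarz[OF assms(1) tangent] by cases simp_all
  then show ?thesis
    using tangent(2) by (simp add: mink_tangent_proj_left mink_commute[of v "tangent_proj v q"])
qed

text \<open>The hyperbolic law of cosines, with \<open>- mink\<close> in place of \<open>cosh\<close> of the side lengths.\<close>

lemma cos_hangle_law:
  assumes "hyp_pt p" "hyp_pt v" "hyp_pt q"
  shows "cos (hangle p v q) =
    (mink p q + mink p v * mink q v) / sqrt (((mink p v)^2 - 1) * ((mink q v)^2 - 1))"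
  using assms by (simp add: cos_hangle mink_tangent_proj hyp_pt_mink_self power2_eq_square
      algebra_simps)

text \<open>A degenerate angle: the tangent vector of \<open>v\<close> at \<open>v\<close> is zero, and \<open>hangle\<close> evaluates to
  \<open>arccos (0 / 0) = arccos 0\<close>.\<close>

lemma hangle_left_self: "hyp_pt v \<Longrightarrow> hangle v v q = pi / 2"
  by (simp add: hangle_tangent_proj tangent_proj_def hyp_pt_mink_self)

subsection \<open>The half-length of a long edge\<close>

lemma mink_normals_common_perpendicular:
  assumes hP: "hyp_pt P" and hQ: "hyp_pt Q" and hY: "hyp_pt Y" and hZ: "hyp_pt Z"
    and "P \<noteq> Q" "Y \<noteq> P" "Q \<noteq> Z"
    and right_P: "hangle Y P Q = pi / 2" and right_Q: "hangle P Q Z = pi / 2"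
    and u: "mink u Y = 0" "mink u P = 0" and w: "mink w Q = 0" "mink w Z = 0"
  shows "(mink u w)^2 = mink u u * mink w w * (mink P Q)^2"
proof -
  define \<beta> where "\<beta> = mink P Q"
  define n1 where "n1 = tangent_proj P Q"
  define n2 where "n2 = tangent_proj Q P"
  have n1: "mink n1 Y = 0" "mink n1 P = 0"
    using hangle_right_imp_orthogonal[OF hP right_P] hP by (simp_all add: n1_def mink_commute[of Y])
  have n2: "mink n2 Q = 0" "mink n2 Z = 0"
    using hangle_right_imp_orthogonal[OF hQ right_Q[unfolded hangle_commute[of P]]] hQ
    by (simp_all add: n2_def mink_commute[of Z])
  have n1n1: "mink n1 n1 = \<beta>^2 - 1" and n2n2: "mink n2 n2 = \<beta>^2 - 1"
    using hP hQ by (simp_all add: n1_def n2_def \<beta>_def mink_tangent_proj hyp_pt_mink_self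
        mink_commute[of Q P] power2_eq_square)
  have n1n2: "mink n1 n2 = \<beta> * (\<beta>^2 - 1)"
    using hP hQ by (simp add: n1_def n2_def \<beta>_def tangent_proj_def hyp_pt_mink_self
        mink_commute[of Q P] power2_eq_square algebra_simps)
  have "\<beta> \<le> -1" "\<beta> \<noteq> -1"
    using mink_hyp_pt_le_neg1[OF hP hQ] mink_hyp_pt_eq_neg1_iff[OF hP hQ] \<open>P \<noteq> Q\<close>
    by (simp_all add: \<beta>_def)
  then have "\<beta>^2 - 1 \<noteq> 0"
    by (auto simp: power2_eq_square square_eq_1_iff)
  then have "n1 \<noteq> 0" "n2 \<noteq> 0"
    using n1n1 n2n2 by auto
  obtain a where "u = a *\<^sub>R n1"
    using mink_orthogonal_collinear[OF u n1 hyp_pt_cross_nonzero[OF hY hP \<open>Y \<noteq> P\<close>] \<open>n1 \<noteq> 0\<close>] .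
  moreover obtain b where "w = b *\<^sub>R n2"
    using mink_orthogonal_collinear[OF w n2 hyp_pt_cross_nonzero[OF hQ hZ \<open>Q \<noteq> Z\<close>] \<open>n2 \<noteq> 0\<close>] .
  ultimately show ?thesis
    by (simp add: \<beta>_def[symmetric] n1n1 n2n2 n1n2 power2_eq_square algebra_simps)
qed

lemma mink_normals_tripod_center:
  assumes hC: "hyp_pt C" and hA: "hyp_pt A" and hB: "hyp_pt B"
    and CA: "mink C A = - c" and CB: "mink C B = - c" and "c > 1"
    and angle: "hangle A C B = 2 * \<alpha>"
  shows "mink (tangent_proj A C) (tangent_proj B C) = (c^2 - 1) * (1 - 2 * c^2 * (sin \<alpha>)^2)"
proof -
  have pos: "c^2 - 1 > 0"
    using \<open>c > 1\<close> by (simp add: one_less_power)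
  have "cos (2 * \<alpha>) = (mink A B + c^2) / (c^2 - 1)"
    using cos_hangle_law[OF hA hC hB] angle CA CB pos
    by (simp add: mink_commute[of A C] mink_commute[of B C] real_sqrt_mult_self power2_eq_square)
  then have "1 - 2 * (sin \<alpha>)^2 = (mink A B + c^2) / (c^2 - 1)"
    by (simp only: cos_double_sin)
  then have "(1 - 2 * (sin \<alpha>)^2) * (c^2 - 1) = mink A B + c^2"
    using pos by (simp add: eq_divide_eq)
  then have AB: "mink A B = (c^2 - 1) * (1 - 2 * (sin \<alpha>)^2) - c^2"
    by (simp add: mult.commute)
  have "mink (tangent_proj A C) (tangent_proj B C) = 2 * c^2 - 1 + c^2 * mink A B"
    using CA CB hC by (simp add: tangent_proj_def hyp_pt_mink_self mink_commute[of A C]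
        mink_commute[of B C] mink_commute[of B A] power2_eq_square algebra_simps)
  then show ?thesis
    unfolding AB by (simp add: algebra_simps power2_eq_square)
qed

text \<open>The tangents of the tripod legs at \<open>A\<close> and \<open>B\<close> are normals of \<open>YP\<close> and \<open>QZ\<close>; comparing
  their Minkowski product along \<open>PQ\<close> and at the centre \<open>C\<close> gives
  \<open>cosh (PQ) = 2 c\<^sup>2 sin\<^sup>2 \<alpha> - 1\<close>.\<close>

lemma cosh_half_hdist_tripod_edge:
  assumes hP: "hyp_pt P" and hQ: "hyp_pt Q" and hY: "hyp_pt Y" and hZ: "hyp_pt Z"
    and hC: "hyp_pt C" and hA: "hyp_pt A" and hB: "hyp_pt B"
    and neq: "P \<noteq> Q" "Y \<noteq> P" "Q \<noteq> Z"
    and right: "hangle Y P Q = pi / 2" "hangle P Q Z = pi / 2"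
    and normal_A: "mink (tangent_proj A C) Y = 0" "mink (tangent_proj A C) P = 0"
    and normal_B: "mink (tangent_proj B C) Q = 0" "mink (tangent_proj B C) Z = 0"
    and CA: "mink C A = - c" and CB: "mink C B = - c" and "c > 1"
    and angle: "hangle A C B = 2 * \<alpha>" and "0 < \<alpha>" "\<alpha> < pi / 2"
  shows "cosh (hdist P Q / 2) = c * sin \<alpha>"
proof -
  define \<beta> where "\<beta> = mink P Q"
  define k where "k = 1 - 2 * c^2 * (sin \<alpha>)^2"
  have pos: "c^2 - 1 > 0"
    using \<open>c > 1\<close> by (simp add: one_less_power)
  have "sin \<alpha> > 0"
    using \<open>0 < \<alpha>\<close> \<open>\<alpha> < pi / 2\<close> by (simp add: sin_gt_zero)
  have "mink (tangent_proj A C) (tangent_proj A C) = c^2 - 1"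
    "mink (tangent_proj B C) (tangent_proj B C) = c^2 - 1"
    using hA hB hC CA CB by (simp_all add: mink_tangent_proj hyp_pt_mink_self power2_eq_square)
  then have "((c^2 - 1) * k)^2 = (c^2 - 1)^2 * \<beta>^2"
    using mink_normals_common_perpendicular[OF hP hQ hY hZ neq right normal_A normal_B]
      mink_normals_tripod_center[OF hC hA hB CA CB \<open>c > 1\<close> angle]
    by (simp add: k_def \<beta>_def power2_eq_square)
  then have "k^2 = \<beta>^2"
    using pos by (simp add: power_mult_distrib)
  moreover have "\<beta> \<le> -1"
    unfolding \<beta>_def using mink_hyp_pt_le_neg1[OF hP hQ] .
  moreover have "k < 1"
    using \<open>c > 1\<close> \<open>sin \<alpha> > 0\<close> by (simp add: k_def)
  ultimately have "k = \<beta>"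
    by (smt (verit) power2_eq_iff)
  moreover have "2 * (cosh (hdist P Q / 2))^2 - 1 = - \<beta>"
    using cosh_double_cosh[of "hdist P Q / 2"] cosh_hdist[OF hP hQ] by (simp add: \<beta>_def)
  ultimately have "(cosh (hdist P Q / 2))^2 = (c * sin \<alpha>)^2"
    by (simp add: k_def power_mult_distrib)
  moreover have "c * sin \<alpha> \<ge> 0"
    using \<open>c > 1\<close> \<open>sin \<alpha> > 0\<close> by simp
  ultimately show ?thesis
    by (simp add: power2_eq_iff_nonneg)
qed

subsection \<open>Hexagons\<close>

lemma vx_mod: "vx v (k mod 6) = vx v k"
  and vx_mod_add: "vx v (k mod 6 + j) = vx v (k + j)"
  by (simp_all add: vx_def mod_add_left_eq)

lemma det3_same: "det3 a a w = 0"
  unfolding det3_def by (simp add: algebra_simps)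

lemma right_angled_hexagon_vx:
  assumes "right_angled_hexagon v"
  shows right_angled_hexagon_hyp_pt: "hyp_pt (vx v k)"
    and right_angled_hexagon_right_angle: "hangle (vx v (k + 5)) (vx v k) (vx v (k + 1)) = pi / 2"
    and right_angled_hexagon_adjacent_neq: "vx v k \<noteq> vx v (k + 1)"
proof -
  have k: "k mod 6 < 6"
    by simp
  show "hyp_pt (vx v k)"
    using assms k unfolding right_angled_hexagon_def vx_def by simp
  have "hangle (vx v (k mod 6 + 5)) (vx v (k mod 6)) (vx v (k mod 6 + 1)) = pi / 2"
    using assms k unfolding right_angled_hexagon_def by blast
  then show "hangle (vx v (k + 5)) (vx v k) (vx v (k + 1)) = pi / 2"
    by (simp only: vx_mod vx_mod_add)
  have "(k + 2) mod 6 \<noteq> k mod 6" "(k + 2) mod 6 \<noteq> (k mod 6 + 1) mod 6"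
    by presburger+
  then have "(det3 (vx v (k mod 6)) (vx v (k mod 6 + 1)) (vx v ((k + 2) mod 6)))^2 > 0"
    using assms k unfolding right_angled_hexagon_def power2_eq_square by simp
  then have "(det3 (vx v k) (vx v (k + 1)) (vx v (k + 2)))^2 > 0"
    by (simp only: vx_mod vx_mod_add)
  then show "vx v k \<noteq> vx v (k + 1)"
    by (metis det3_same less_irrefl zero_power2)
qed

lemma hline_mem_left: "hyp_pt p \<Longrightarrow> p \<in> hline p q"
  and hline_mem_right: "hyp_pt q \<Longrightarrow> q \<in> hline p q"
  unfolding hline_def by (simp_all add: span_base)

lemma perp_foot_hline:
  assumes "perp_foot C (hline p q) A"
  shows perp_foot_hyp_pt: "hyp_pt A"
    and perp_foot_orthogonal: "X \<in> hline p q \<Longrightarrow> mink (tangent_proj A C) X = 0"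
proof -
  show hA: "hyp_pt A"
    using assms unfolding perp_foot_def hline_def by simp
  assume X: "X \<in> hline p q"
  show "mink (tangent_proj A C) X = 0"
  proof (cases "X = A")
    case False
    then have "hangle X A C = pi / 2"
      using assms X unfolding perp_foot_def by (simp add: hangle_commute[of X])
    then have "mink X (tangent_proj A C) = 0"
      by (rule hangle_right_imp_orthogonal[OF hA])
    then show ?thesis
      by (simp add: mink_commute[of X])
  qed (use hA in simp)
qed

lemma right_angled_hexagon_cosh_half_edge:
  assumes hex: "right_angled_hexagon v" and hC: "hyp_pt C"
    and A: "perp_foot C (hline (vx v (k + 5)) (vx v k)) A"
    and B: "perp_foot C (hline (vx v (k + 1)) (vx v (k + 2))) B"
    and "hdist C A = d" "hdist C B = d" "d \<noteq> 0"
    and angle: "hangle A C B = 2 * \<alpha>" and "0 < \<alpha>" "\<alpha> < pi / 2"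
  shows "cosh (hdist (vx v k) (vx v (k + 1)) / 2) = cosh d * sin \<alpha>"
proof -
  note hyp = right_angled_hexagon_hyp_pt[OF hex]
  have hA: "hyp_pt A" and hB: "hyp_pt B"
    using A B by (simp_all add: perp_foot_hyp_pt)
  have wrap: "vx v (k + 5 + 1) = vx v k" "vx v (k + 1 + 5) = vx v k" "vx v (k + 1 + 1) = vx v (k + 2)"
    by (simp_all add: vx_def)
  have neq: "vx v k \<noteq> vx v (k + 1)" "vx v (k + 5) \<noteq> vx v k" "vx v (k + 1) \<noteq> vx v (k + 2)"
    using right_angled_hexagon_adjacent_neq[OF hex, of k] right_angled_hexagon_adjacent_neq[OF hex, of "k + 5"]
      right_angled_hexagon_adjacent_neq[OF hex, of "k + 1"]
    by (simp_all only: wrap not_False_eq_True)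
  have right: "hangle (vx v (k + 5)) (vx v k) (vx v (k + 1)) = pi / 2"
    "hangle (vx v k) (vx v (k + 1)) (vx v (k + 2)) = pi / 2"
    using right_angled_hexagon_right_angle[OF hex, of k] right_angled_hexagon_right_angle[OF hex, of "k + 1"]
    by (simp_all only: wrap)
  have "d \<ge> 0"
    using hdist_nonneg[OF hC hA] \<open>hdist C A = d\<close> by simp
  then have "cosh d > 1"
    using \<open>d \<noteq> 0\<close> cosh_real_nonneg_less_iff[of 0 d] by simp
  show ?thesis
  proof (rule cosh_half_hdist_tripod_edge[OF hyp hyp hyp hyp hC hA hB neq right _ _ _ _ _ _ \<open>cosh d > 1\<close> angle
        \<open>0 < \<alpha>\<close> \<open>\<alpha> < pi / 2\<close>])
    show "mink (tangent_proj A C) (vx v (k + 5)) = 0" "mink (tangent_proj A C) (vx v k) = 0"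
      using perp_foot_orthogonal[OF A] hyp by (simp_all add: hline_mem_left hline_mem_right)
    show "mink (tangent_proj B C) (vx v (k + 1)) = 0" "mink (tangent_proj B C) (vx v (k + 2)) = 0"
      using perp_foot_orthogonal[OF B] hyp by (simp_all add: hline_mem_left hline_mem_right)
    show "mink C A = - cosh d" "mink C B = - cosh d"
      using cosh_hdist[OF hC hA] cosh_hdist[OF hC hB] \<open>hdist C A = d\<close> \<open>hdist C B = d\<close> by simp_all
  qed
qed

text \<open>For \<open>d = 0\<close> all three feet coincide with the centre, and every angle at the centre
  degenerates to \<open>pi / 2\<close>; the angle sum then contradicts \<open>\<alpha> 1 + \<alpha> 2 + \<alpha> 3 = pi\<close>.\<close>

lemma hex_tripod_length_nonzero:
  assumes tripod: "hex_tripod v C A d \<alpha>" and sum: "\<alpha> 1 + \<alpha> 2 + \<alpha> 3 = pi"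
  shows "d \<noteq> 0"
proof
  assume "d = 0"
  have hC: "hyp_pt C"
    using tripod unfolding hex_tripod_def hex_interior_def by simp
  have "A j = C" if "j \<in> {1, 2, 3}" for j
  proof -
    have "perp_foot C (short_line v j) (A j)" "hdist C (A j) = 0"
      using tripod that \<open>d = 0\<close> unfolding hex_tripod_def by auto
    then have hA: "hyp_pt (A j)"
      by (simp add: short_line_def perp_foot_hyp_pt)
    then have "mink C (A j) = -1"
      using cosh_hdist[OF hC hA] \<open>hdist C (A j) = 0\<close> by simp
    then show ?thesis
      using mink_hyp_pt_eq_neg1_iff[OF hC hA] by simp
  qed
  then have "2 * \<alpha> i = pi / 2" if "{i, j, m} = {1, 2, 3}" for i j m
    using tripod that hangle_left_self[OF hC] unfolding hex_tripod_def
    by (metis insertCI)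
  from this[of 1 2 3] this[of 2 3 1] this[of 3 1 2] show False
    using sum pi_gt_zero by (auto simp: insert_commute)
qed

lemma hex_tripod_cosh_half_long_len:
  assumes tripod: "hex_tripod v C A d \<alpha>"
    and \<alpha>: "\<forall>i\<in>{1,2,3}. 0 < \<alpha> i \<and> \<alpha> i < pi / 2"
    and sum: "\<alpha> 1 + \<alpha> 2 + \<alpha> 3 = pi"
    and i: "i \<in> {1, 2, 3}"
  shows "cosh (long_len v i / 2) = cosh d * sin (\<alpha> i)"
proof -
  have hex: "right_angled_hexagon v" and hC: "hyp_pt C"
    using tripod unfolding hex_tripod_def hex_interior_def by simp_all
  have edge: "cosh (hdist (vx v k) (vx v (k + 1)) / 2) = cosh d * sin (\<alpha> i)"
    if "short_line v j = hline (vx v (k + 5)) (vx v k)"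
      "short_line v m = hline (vx v (k + 1)) (vx v (k + 2))"
      "{i, j, m} = {1, 2, 3}" for j m k
  proof (rule right_angled_hexagon_cosh_half_edge[OF hex hC])
    have "j \<in> {1, 2, 3}" "m \<in> {1, 2, 3}"
      using that(3) by blast+
    then show "perp_foot C (hline (vx v (k + 5)) (vx v k)) (A j)"
      "perp_foot C (hline (vx v (k + 1)) (vx v (k + 2))) (A m)"
      "hdist C (A j) = d" "hdist C (A m) = d"
      using tripod that(1,2) unfolding hex_tripod_def by auto
    show "hangle (A j) C (A m) = 2 * \<alpha> i"
      using tripod that(3) unfolding hex_tripod_def by blast
  qed (use hex_tripod_length_nonzero[OF tripod sum] \<alpha> i in auto)
  from i consider "i = 1" | "i = 2" | "i = 3"
    by blast
  then show ?thesis
  proof cases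
    case 1
    have "cosh (hdist (vx v 0) (vx v (0 + 1)) / 2) = cosh d * sin (\<alpha> i)"
      \<comment> \<open>keep \<open>0 + 2\<close> from becoming \<open>Suc (Suc 0)\<close>, which does not match \<open>8 mod 6 = 2\<close>\<close>
      by (rule edge[where j = 2 and m = 3])
        (use 1 in \<open>simp_all add: short_line_def vx_def del: add_2_eq_Suc'\<close>)
    then show ?thesis
      using 1 by (simp add: long_len_def)
  next
    case 2
    have "cosh (hdist (vx v 2) (vx v (2 + 1)) / 2) = cosh d * sin (\<alpha> i)"
      by (rule edge[where j = 3 and m = 1]) (use 2 in \<open>auto simp: short_line_def vx_def\<close>)
    then show ?thesis
      using 2 by (simp add: long_len_def)
  next
    case 3
    have "cosh (hdist (vx v 4) (vx v (4 + 1)) / 2) = cosh d * sin (\<alpha> i)"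
      by (rule edge[where j = 1 and m = 2]) (use 3 in \<open>auto simp: short_line_def vx_def\<close>)
    then show ?thesis
      using 3 by (simp add: long_len_def)
  qed
qed

theorem mainTheorem3:
  fixes \<alpha> :: "nat \<Rightarrow> real"
    and v v' :: "nat \<Rightarrow> real^3" and C C' :: "real^3" and A A' :: "nat \<Rightarrow> real^3"
    and d d' :: real
  assumes "\<forall>i\<in>{1,2,3}. 0 < \<alpha> i \<and> \<alpha> i < pi / 2"
    and "\<alpha> 1 + \<alpha> 2 + \<alpha> 3 = pi"
    and "hex_tripod v C A d \<alpha>"
    and "hex_tripod v' C' A' d' \<alpha>"
  shows "\<forall>i\<in>{1,2,3}. \<forall>j\<in>{1,2,3}.
           cosh (long_len v' i / 2) / cosh (long_len v' j / 2)
             = cosh (long_len v i / 2) / cosh (long_len v j / 2)"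
  using hex_tripod_cosh_half_long_len[OF assms(3,1,2)] hex_tripod_cosh_half_long_len[OF assms(4,1,2)]
  by simp

end
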